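(* (Soundness.) Every rule of the calculus D.BL is sound with respect to perfect heterogeneous bilattices, and every rule of D.CBL is sound with respect to perfect heterogeneous bilattices with conflation: for every perfect HBL (resp. perfect HCBL) $(\mathbb{L}_1,\mathbb{L}_2,\mathrm{n},\mathrm{p})$ and every assignment of the type-$i$ atoms to elements of $\mathbb{L}_i$ ($i=1,2$), if the interpretations of all premises of the rule hold, then the interpretation of its conclusion holds; in particular, every sequent derivable in D.BL (resp. D.CBL) holds under every assignment in every perfect HBL (resp. perfect HCBL).
   Context: A heterogeneous bilattice (HBL) is a tuple $(\mathbb{L}_1,\mathbb{L}_2,\mathrm{n},\mathrm{p})$ where $\mathbb{L}_1=(L_1,\sqcap_1,\sqcup_1,0_1,1_1)$ and $\mathbb{L}_2=(L_2,\sqcap_2,\sqcup_2,0_2,1_2)$ are bounded distributive lattices and $\mathrm{n}:\mathbb{L}_1\to\mathbb{L}_2$, $\mathrm{p}:\mathbb{L}_2\to\mathbb{L}_1$ are mutually inverse lattice isomorphisms. A heterogeneous bilattice with conflation (HCBL) is defined in the same way except that $\mathbb{L}_1,\mathbb{L}_2$ are De Morgan algebras (with De Morgan negations ${\sim}_1,{\sim}_2$) and $\mathrm{n},\mathrm{p}$ are mutually inverse De Morgan algebra isomorphisms (so also $\mathrm{n}({\sim}_1a)={\sim}_2\mathrm{n}(a)$, $\mathrm{p}({\sim}_2b)={\sim}_1\mathrm{p}(b)$). An HBL/HCBL is perfect if $\mathbb{L}_1,\mathbb{L}_2$ are perfect distributive lattices (complete, completely distributive, completely join-generated by completely join-irreducible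 elements and completely meet-generated by completely meet-irreducible elements) and $\mathrm{n},\mathrm{p}$ preserve arbitrary joins and meets. Calculus D.BL. There are two types, $1$ and $2$; for each $i$ fix a countable set of type-$i$ atoms $p_i,q_i,\dots$. Type-1 formulas: $A_1::=p_1\mid 1_1\mid 0_1\mid \mathrm{p}A_2\mid A_1\sqcap_1A_1\mid A_1\sqcup_1A_1$; type-2 formulas: $A_2::=p_2\mid 1_2\mid 0_2\mid \mathrm{n}A_1\mid A_2\sqcap_2A_2\mid A_2\sqcup_2A_2$. Type-1 structures: $X_1::=A_1\mid \hat1_1\mid\check0_1\mid \mathrm{P}X_2\mid X_1\hat\sqcap_1X_1\mid X_1\check\sqcup_1X_1\mid X_1\check\sqsupset_1X_1\mid X_1\hat\sqsubset_1X_1$; type-2 structures: $X_2::=A_2\mid \hat1_2\mid\check0_2\mid \mathrm{N}X_1\mid X_2\hat\sqcap_2X_2\mid X_2\check\sqcup_2X_2\mid X_2\check\sqsupset_2X_2\mid X_2\hat\sqsubset_2X_2$. A sequent is $X_i\vdash Y_i$ with both sides of the same type. Rules (for $i\in\{1,2\}$; $X,Y,Z,W$ type-$i$ structures and $A,B$ type-$i$ formulas unless indexed otherwise; "$\Leftrightarrow$" means the rule applies in both directions): Display: $X\hat\sqcap_iY\vdash Z\Leftrightarrow X\vdash Y\check\sqsupset_iZ$; $X\vdash Y\check\sqcup_iZ\Leftrightarrow X\hat\sqsubset_iY\vdash Z$; $\mathrm{P}X_2\vdash Y_1\Leftrightarrow X_2\vdash \mathrm{N}Y_1$; $\mathrm{N}X_1\vdash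 Y_2\Leftrightarrow X_1\vdash\mathrm{P}Y_2$. Identity $p_i\vdash p_i$ for atoms; Cut: from $X\vdash A$ and $A\vdash Y$ infer $X\vdash Y$. Structural: from $X\hat\sqcap_i\hat1_i\vdash Y$ infer $X\vdash Y$; from $X\vdash Y\check\sqcup_i\check0_i$ infer $X\vdash Y$; from $X\hat\sqcap_iY\vdash Z$ infer $Y\hat\sqcap_iX\vdash Z$; from $X\vdash Y\check\sqcup_iZ$ infer $X\vdash Z\check\sqcup_iY$; from $(X\hat\sqcap_iY)\hat\sqcap_iZ\vdash W$ infer $X\hat\sqcap_i(Y\hat\sqcap_iZ)\vdash W$; from $X\vdash(Y\check\sqcup_iZ)\check\sqcup_iW$ infer $X\vdash Y\check\sqcup_i(Z\check\sqcup_iW)$; from $X\vdash Z$ infer $X\hat\sqcap_iY\vdash Z$; from $X\vdash Y$ infer $X\vdash Y\check\sqcup_iZ$; from $X\hat\sqcap_iX\vdash Z$ infer $X\vdash Z$; from $X\vdash Y\check\sqcup_iY$ infer $X\vdash Y$. Operational: from $\hat1_i\vdash X$ infer $1_i\vdash X$; axiom $\hat1_i\vdash 1_i$; axiom $0_i\vdash\check0_i$; from $X\vdash\check0_i$ infer $X\vdash 0_i$; from $A\hat\sqcap_iB\vdash X$ infer $A\sqcap_iB\vdash X$; from $X\vdash A$ and $Y\vdash B$ infer $X\hat\sqcap_iY\vdash A\sqcap_iB$; from $A\vdash X$ and $B\vdash Y$ infer $A\sqcup_iB\vdash X\check\sqcup_iY$; from $X\vdash A\check\sqcup_iB$ infer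 $X\vdash A\sqcup_iB$. Multi-type structural: $X_1\vdash Y_1\Leftrightarrow \mathrm{N}X_1\vdash\mathrm{N}Y_1$; $X_2\vdash Y_2\Leftrightarrow\mathrm{P}X_2\vdash\mathrm{P}Y_2$; from $\check0_1\vdash X_1$ infer $\mathrm{P}\check0_2\vdash X_1$; from $X_1\vdash\hat1_1$ infer $X_1\vdash\mathrm{P}\hat1_2$. Multi-type operational: from $\mathrm{N}A_1\vdash X_2$ infer $\mathrm{n}A_1\vdash X_2$; from $X_2\vdash\mathrm{N}A_1$ infer $X_2\vdash\mathrm{n}A_1$; from $\mathrm{P}A_2\vdash X_1$ infer $\mathrm{p}A_2\vdash X_1$; from $X_1\vdash\mathrm{P}A_2$ infer $X_1\vdash\mathrm{p}A_2$. Calculus D.CBL: add formulas ${\sim}_iA_i$ and structures $\ast_iX_i$ of type $i$, and the rules $\ast_iX\vdash Y\Leftrightarrow\ast_iY\vdash X$; $X\vdash\ast_iY\Leftrightarrow Y\vdash\ast_iX$; $X\vdash Y\Leftrightarrow\ast_iY\vdash\ast_iX$; from $\mathrm{N}\ast_1X_1\vdash Y_2$ infer $\ast_2\mathrm{N}X_1\vdash Y_2$; from $X_2\vdash\mathrm{N}\ast_1Y_1$ infer $X_2\vdash\ast_2\mathrm{N}Y_1$; from $\ast_iA\vdash Y$ infer ${\sim}_iA\vdash Y$; from $X\vdash\ast_iA$ infer $X\vdash{\sim}_iA$. Derivations are finite trees of rule applications with axioms at the leaves. Interpretation: given an assignment of atoms, formulas are interpreted with $\sqcap_i,\sqcup_i,0_i,1_i,\mathrm{n},\mathrm{p},{\sim}_i$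 as the algebra operations; structures are interpreted by reading $\hat1_i,\check0_i,\hat\sqcap_i,\check\sqcup_i,\mathrm{N},\mathrm{P},\ast_i$ as $1_i,0_i,\sqcap_i,\sqcup_i,\mathrm{n},\mathrm{p},{\sim}_i$, $Y\check\sqsupset_iZ$ as the right residual of $\sqcap_i$ (the largest $x$ with $x\sqcap_i y\le z$) and $X\hat\sqsubset_iY$ as the left residual of $\sqcup_i$ (the least $z$ with $x\le y\sqcup_i z$), which exist in perfect lattices. A sequent $X\vdash Y$ holds if the interpretation of $X$ is $\le_i$ that of $Y$. *)

theory Defs
  imports Main
begin

text \<open>A perfect distributive lattice is rendered as a type of class complete_distrib_lattice
 (complete and completely distributive in the sense of the Inf-Sup law), which moreover is
 completely join-generated by its completely join-irreducible elements and completely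
 meet-generated by its completely meet-irreducible elements.\<close>

definition cji :: "'a::complete_lattice \<Rightarrow> bool" where
  "cji j \<longleftrightarrow> (\<forall>S. j = Sup S \<longrightarrow> j \<in> S)"

definition cmi :: "'a::complete_lattice \<Rightarrow> bool" where
  "cmi m \<longleftrightarrow> (\<forall>S. m = Inf S \<longrightarrow> m \<in> S)"

definition perfect_lattice :: "'a::complete_distrib_lattice itself \<Rightarrow> bool" where
  "perfect_lattice _ \<longleftrightarrow>
     (\<forall>x::'a. x = Sup {j. cji j \<and> j \<le> x}) \<and>
     (\<forall>x::'a. x = Inf {m. cmi m \<and> x \<le> m})"

definition lattice_iso_pair ::
  "('a::complete_distrib_lattice \<Rightarrow> 'b::complete_distrib_lattice) \<Rightarrow> ('b \<Rightarrow> 'a) \<Rightarrow> bool" where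
  "lattice_iso_pair n p \<longleftrightarrow>
     (\<forall>a. p (n a) = a) \<and> (\<forall>b. n (p b) = b) \<and>
     (\<forall>a b. n (inf a b) = inf (n a) (n b)) \<and> (\<forall>a b. n (sup a b) = sup (n a) (n b)) \<and>
     n bot = bot \<and> n top = top \<and>
     (\<forall>a b. p (inf a b) = inf (p a) (p b)) \<and> (\<forall>a b. p (sup a b) = sup (p a) (p b)) \<and>
     p bot = bot \<and> p top = top"

definition perfect_HBL ::
  "('a::complete_distrib_lattice \<Rightarrow> 'b::complete_distrib_lattice) \<Rightarrow> ('b \<Rightarrow> 'a) \<Rightarrow> bool" where
  "perfect_HBL n p \<longleftrightarrow>
     perfect_lattice TYPE('a) \<and> perfect_lattice TYPE('b) \<and> lattice_iso_pair n p \<and>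
     (\<forall>A. n (Sup A) = Sup (n ` A)) \<and> (\<forall>A. n (Inf A) = Inf (n ` A)) \<and>
     (\<forall>B. p (Sup B) = Sup (p ` B)) \<and> (\<forall>B. p (Inf B) = Inf (p ` B))"

definition de_morgan_neg :: "('a::distrib_lattice \<Rightarrow> 'a) \<Rightarrow> bool" where
  "de_morgan_neg ng \<longleftrightarrow> (\<forall>a. ng (ng a) = a) \<and> (\<forall>a b. ng (sup a b) = inf (ng a) (ng b))"

definition perfect_HCBL ::
  "('a::complete_distrib_lattice \<Rightarrow> 'b::complete_distrib_lattice) \<Rightarrow> ('b \<Rightarrow> 'a)
   \<Rightarrow> ('a \<Rightarrow> 'a) \<Rightarrow> ('b \<Rightarrow> 'b) \<Rightarrow> bool" where
  "perfect_HCBL n p ng1 ng2 \<longleftrightarrow>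
     perfect_HBL n p \<and> de_morgan_neg ng1 \<and> de_morgan_neg ng2 \<and>
     (\<forall>a. n (ng1 a) = ng2 (n a)) \<and> (\<forall>b. p (ng2 b) = ng1 (p b))"

section \<open>Syntax (formulas of D.CBL; D.BL formulas are the conflation-free ones)\<close>

datatype fm1 = At1 nat | One1 | Zero1 | Pf fm2 | Meet1 fm1 fm1 | Join1 fm1 fm1 | Neg1 fm1
     and fm2 = At2 nat | One2 | Zero2 | Nf fm1 | Meet2 fm2 fm2 | Join2 fm2 fm2 | Neg2 fm2

text \<open>Structures. SImp X Y stands for X \<sqsupset> Y (check), SCoimp X Y for X \<sqsubset> Y (hat),
 SStar for the structural conflation.\<close>
datatype str1 = F1 fm1 | SOne1 | SZero1 | SP str2 | SMeet1 str1 str1 | SJoin1 str1 str1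
              | SImp1 str1 str1 | SCoimp1 str1 str1 | SStar1 str1
     and str2 = F2 fm2 | SOne2 | SZero2 | SN str1 | SMeet2 str2 str2 | SJoin2 str2 str2
              | SImp2 str2 str2 | SCoimp2 str2 str2 | SStar2 str2

datatype seq = Seq1 str1 str1 | Seq2 str2 str2

primrec cf_fm1 :: "fm1 \<Rightarrow> bool" and cf_fm2 :: "fm2 \<Rightarrow> bool" where
  "cf_fm1 (At1 k) = True" | "cf_fm1 One1 = True" | "cf_fm1 Zero1 = True"
| "cf_fm1 (Pf A) = cf_fm2 A" | "cf_fm1 (Meet1 A B) = (cf_fm1 A \<and> cf_fm1 B)"
| "cf_fm1 (Join1 A B) = (cf_fm1 A \<and> cf_fm1 B)" | "cf_fm1 (Neg1 A) = False"
| "cf_fm2 (At2 k) = True" | "cf_fm2 One2 = True" | "cf_fm2 Zero2 = True"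
| "cf_fm2 (Nf A) = cf_fm1 A" | "cf_fm2 (Meet2 A B) = (cf_fm2 A \<and> cf_fm2 B)"
| "cf_fm2 (Join2 A B) = (cf_fm2 A \<and> cf_fm2 B)" | "cf_fm2 (Neg2 A) = False"

primrec cf_str1 :: "str1 \<Rightarrow> bool" and cf_str2 :: "str2 \<Rightarrow> bool" where
  "cf_str1 (F1 A) = cf_fm1 A" | "cf_str1 SOne1 = True" | "cf_str1 SZero1 = True"
| "cf_str1 (SP X) = cf_str2 X" | "cf_str1 (SMeet1 X Y) = (cf_str1 X \<and> cf_str1 Y)"
| "cf_str1 (SJoin1 X Y) = (cf_str1 X \<and> cf_str1 Y)" | "cf_str1 (SImp1 X Y) = (cf_str1 X \<and> cf_str1 Y)"
| "cf_str1 (SCoimp1 X Y) = (cf_str1 X \<and> cf_str1 Y)" | "cf_str1 (SStar1 X) = False"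
| "cf_str2 (F2 A) = cf_fm2 A" | "cf_str2 SOne2 = True" | "cf_str2 SZero2 = True"
| "cf_str2 (SN X) = cf_str1 X" | "cf_str2 (SMeet2 X Y) = (cf_str2 X \<and> cf_str2 Y)"
| "cf_str2 (SJoin2 X Y) = (cf_str2 X \<and> cf_str2 Y)" | "cf_str2 (SImp2 X Y) = (cf_str2 X \<and> cf_str2 Y)"
| "cf_str2 (SCoimp2 X Y) = (cf_str2 X \<and> cf_str2 Y)" | "cf_str2 (SStar2 X) = False"

fun cf_seq :: "seq \<Rightarrow> bool" where
  "cf_seq (Seq1 X Y) = (cf_str1 X \<and> cf_str1 Y)"
| "cf_seq (Seq2 X Y) = (cf_str2 X \<and> cf_str2 Y)"

text \<open>A rule instance is a pair (premises, conclusion). "rule_common" collects the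
 rules of D.BL (both directions of each display/bidirectional rule), "rule_conf" the
 additional rules of D.CBL.\<close>

inductive rule_common :: "seq list \<Rightarrow> seq \<Rightarrow> bool" where
  d1a: "rule_common [Seq1 (SMeet1 X Y) Z] (Seq1 X (SImp1 Y Z))"
| d1b: "rule_common [Seq1 X (SImp1 Y Z)] (Seq1 (SMeet1 X Y) Z)"
| d1c: "rule_common [Seq1 X (SJoin1 Y Z)] (Seq1 (SCoimp1 X Y) Z)"
| d1d: "rule_common [Seq1 (SCoimp1 X Y) Z] (Seq1 X (SJoin1 Y Z))"
| d2a: "rule_common [Seq2 (SMeet2 X' Y') Z'] (Seq2 X' (SImp2 Y' Z'))"
| d2b: "rule_common [Seq2 X' (SImp2 Y' Z')] (Seq2 (SMeet2 X' Y') Z')"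
| d2c: "rule_common [Seq2 X' (SJoin2 Y' Z')] (Seq2 (SCoimp2 X' Y') Z')"
| d2d: "rule_common [Seq2 (SCoimp2 X' Y') Z'] (Seq2 X' (SJoin2 Y' Z'))"
| dPa: "rule_common [Seq1 (SP X') Y] (Seq2 X' (SN Y))"
| dPb: "rule_common [Seq2 X' (SN Y)] (Seq1 (SP X') Y)"
| dNa: "rule_common [Seq2 (SN X) Y'] (Seq1 X (SP Y'))"
| dNb: "rule_common [Seq1 X (SP Y')] (Seq2 (SN X) Y')"
| id1: "rule_common [] (Seq1 (F1 (At1 k)) (F1 (At1 k)))"
| id2: "rule_common [] (Seq2 (F2 (At2 k)) (F2 (At2 k)))"
| cut1: "rule_common [Seq1 X (F1 A), Seq1 (F1 A) Y] (Seq1 X Y)"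
| cut2: "rule_common [Seq2 X' (F2 A'), Seq2 (F2 A') Y'] (Seq2 X' Y')"
| s1_1: "rule_common [Seq1 (SMeet1 X SOne1) Y] (Seq1 X Y)"
| s1_2: "rule_common [Seq1 X (SJoin1 Y SZero1)] (Seq1 X Y)"
| s1_3: "rule_common [Seq1 (SMeet1 X Y) Z] (Seq1 (SMeet1 Y X) Z)"
| s1_4: "rule_common [Seq1 X (SJoin1 Y Z)] (Seq1 X (SJoin1 Z Y))"
| s1_5: "rule_common [Seq1 (SMeet1 (SMeet1 X Y) Z) W] (Seq1 (SMeet1 X (SMeet1 Y Z)) W)"
| s1_6: "rule_common [Seq1 X (SJoin1 (SJoin1 Y Z) W)] (Seq1 X (SJoin1 Y (SJoin1 Z W)))"
| s1_7: "rule_common [Seq1 X Z] (Seq1 (SMeet1 X Y) Z)"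
| s1_8: "rule_common [Seq1 X Y] (Seq1 X (SJoin1 Y Z))"
| s1_9: "rule_common [Seq1 (SMeet1 X X) Z] (Seq1 X Z)"
| s1_10: "rule_common [Seq1 X (SJoin1 Y Y)] (Seq1 X Y)"
| s2_1: "rule_common [Seq2 (SMeet2 X' SOne2) Y'] (Seq2 X' Y')"
| s2_2: "rule_common [Seq2 X' (SJoin2 Y' SZero2)] (Seq2 X' Y')"
| s2_3: "rule_common [Seq2 (SMeet2 X' Y') Z'] (Seq2 (SMeet2 Y' X') Z')"
| s2_4: "rule_common [Seq2 X' (SJoin2 Y' Z')] (Seq2 X' (SJoin2 Z' Y'))"
| s2_5: "rule_common [Seq2 (SMeet2 (SMeet2 X' Y') Z') W'] (Seq2 (SMeet2 X' (SMeet2 Y' Z')) W')"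
| s2_6: "rule_common [Seq2 X' (SJoin2 (SJoin2 Y' Z') W')] (Seq2 X' (SJoin2 Y' (SJoin2 Z' W')))"
| s2_7: "rule_common [Seq2 X' Z'] (Seq2 (SMeet2 X' Y') Z')"
| s2_8: "rule_common [Seq2 X' Y'] (Seq2 X' (SJoin2 Y' Z'))"
| s2_9: "rule_common [Seq2 (SMeet2 X' X') Z'] (Seq2 X' Z')"
| s2_10: "rule_common [Seq2 X' (SJoin2 Y' Y')] (Seq2 X' Y')"
| o1_1: "rule_common [Seq1 SOne1 X] (Seq1 (F1 One1) X)"
| o1_2: "rule_common [] (Seq1 SOne1 (F1 One1))"
| o1_3: "rule_common [] (Seq1 (F1 Zero1) SZero1)"
| o1_4: "rule_common [Seq1 X SZero1] (Seq1 X (F1 Zero1))"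
| o1_5: "rule_common [Seq1 (SMeet1 (F1 A) (F1 B)) X] (Seq1 (F1 (Meet1 A B)) X)"
| o1_6: "rule_common [Seq1 X (F1 A), Seq1 Y (F1 B)] (Seq1 (SMeet1 X Y) (F1 (Meet1 A B)))"
| o1_7: "rule_common [Seq1 (F1 A) X, Seq1 (F1 B) Y] (Seq1 (F1 (Join1 A B)) (SJoin1 X Y))"
| o1_8: "rule_common [Seq1 X (SJoin1 (F1 A) (F1 B))] (Seq1 X (F1 (Join1 A B)))"
| o2_1: "rule_common [Seq2 SOne2 X'] (Seq2 (F2 One2) X')"
| o2_2: "rule_common [] (Seq2 SOne2 (F2 One2))"
| o2_3: "rule_common [] (Seq2 (F2 Zero2) SZero2)"
| o2_4: "rule_common [Seq2 X' SZero2] (Seq2 X' (F2 Zero2))"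
| o2_5: "rule_common [Seq2 (SMeet2 (F2 A') (F2 B')) X'] (Seq2 (F2 (Meet2 A' B')) X')"
| o2_6: "rule_common [Seq2 X' (F2 A'), Seq2 Y' (F2 B')] (Seq2 (SMeet2 X' Y') (F2 (Meet2 A' B')))"
| o2_7: "rule_common [Seq2 (F2 A') X', Seq2 (F2 B') Y'] (Seq2 (F2 (Join2 A' B')) (SJoin2 X' Y'))"
| o2_8: "rule_common [Seq2 X' (SJoin2 (F2 A') (F2 B'))] (Seq2 X' (F2 (Join2 A' B')))"
| mN_a: "rule_common [Seq1 X Y] (Seq2 (SN X) (SN Y))"
| mN_b: "rule_common [Seq2 (SN X) (SN Y)] (Seq1 X Y)"
| mP_a: "rule_common [Seq2 X' Y'] (Seq1 (SP X') (SP Y'))"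
| mP_b: "rule_common [Seq1 (SP X') (SP Y')] (Seq2 X' Y')"
| m_0: "rule_common [Seq1 SZero1 X] (Seq1 (SP SZero2) X)"
| m_1: "rule_common [Seq1 X SOne1] (Seq1 X (SP SOne2))"
| mo_1: "rule_common [Seq2 (SN (F1 A)) X'] (Seq2 (F2 (Nf A)) X')"
| mo_2: "rule_common [Seq2 X' (SN (F1 A))] (Seq2 X' (F2 (Nf A)))"
| mo_3: "rule_common [Seq1 (SP (F2 A')) X] (Seq1 (F1 (Pf A')) X)"
| mo_4: "rule_common [Seq1 X (SP (F2 A'))] (Seq1 X (F1 (Pf A')))"

inductive rule_conf :: "seq list \<Rightarrow> seq \<Rightarrow> bool" where
  c1_1: "rule_conf [Seq1 (SStar1 X) Y] (Seq1 (SStar1 Y) X)"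
| c1_2: "rule_conf [Seq1 X (SStar1 Y)] (Seq1 Y (SStar1 X))"
| c1_3: "rule_conf [Seq1 X Y] (Seq1 (SStar1 Y) (SStar1 X))"
| c1_4: "rule_conf [Seq1 (SStar1 Y) (SStar1 X)] (Seq1 X Y)"
| c2_1: "rule_conf [Seq2 (SStar2 X') Y'] (Seq2 (SStar2 Y') X')"
| c2_2: "rule_conf [Seq2 X' (SStar2 Y')] (Seq2 Y' (SStar2 X'))"
| c2_3: "rule_conf [Seq2 X' Y'] (Seq2 (SStar2 Y') (SStar2 X'))"
| c2_4: "rule_conf [Seq2 (SStar2 Y') (SStar2 X')] (Seq2 X' Y')"
| cN_1: "rule_conf [Seq2 (SN (SStar1 X)) Y'] (Seq2 (SStar2 (SN X)) Y')"
| cN_2: "rule_conf [Seq2 X' (SN (SStar1 Y))] (Seq2 X' (SStar2 (SN Y)))"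
| co1_1: "rule_conf [Seq1 (SStar1 (F1 A)) Y] (Seq1 (F1 (Neg1 A)) Y)"
| co1_2: "rule_conf [Seq1 X (SStar1 (F1 A))] (Seq1 X (F1 (Neg1 A)))"
| co2_1: "rule_conf [Seq2 (SStar2 (F2 A')) Y'] (Seq2 (F2 (Neg2 A')) Y')"
| co2_2: "rule_conf [Seq2 X' (SStar2 (F2 A'))] (Seq2 X' (F2 (Neg2 A')))"

definition rule_BL :: "seq list \<Rightarrow> seq \<Rightarrow> bool" where
  "rule_BL ps c \<longleftrightarrow> rule_common ps c \<and> cf_seq c \<and> (\<forall>q\<in>set ps. cf_seq q)"

definition rule_CBL :: "seq list \<Rightarrow> seq \<Rightarrow> bool" where
  "rule_CBL ps c \<longleftrightarrow> rule_common ps c \<or> rule_conf ps c"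

inductive deriv_BL :: "seq \<Rightarrow> bool" where
  "rule_BL ps c \<Longrightarrow> \<forall>q\<in>set ps. deriv_BL q \<Longrightarrow> deriv_BL c"

inductive deriv_CBL :: "seq \<Rightarrow> bool" where
  "rule_CBL ps c \<Longrightarrow> \<forall>q\<in>set ps. deriv_CBL q \<Longrightarrow> deriv_CBL c"

definition rres :: "'a::complete_lattice \<Rightarrow> 'a \<Rightarrow> 'a" where
  "rres y z = Sup {x. inf x y \<le> z}"

definition lres :: "'a::complete_lattice \<Rightarrow> 'a \<Rightarrow> 'a" where
  "lres x y = Inf {z. x \<le> sup y z}"

primrec ifm1 :: "('a::complete_distrib_lattice \<Rightarrow> 'b::complete_distrib_lattice) \<Rightarrow> ('b \<Rightarrow> 'a)
      \<Rightarrow> ('a \<Rightarrow> 'a) \<Rightarrow> ('b \<Rightarrow> 'b) \<Rightarrow> (nat \<Rightarrow> 'a) \<Rightarrow> (nat \<Rightarrow> 'b) \<Rightarrow> fm1 \<Rightarrow> 'a"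
 and ifm2 :: "('a::complete_distrib_lattice \<Rightarrow> 'b::complete_distrib_lattice) \<Rightarrow> ('b \<Rightarrow> 'a)
      \<Rightarrow> ('a \<Rightarrow> 'a) \<Rightarrow> ('b \<Rightarrow> 'b) \<Rightarrow> (nat \<Rightarrow> 'a) \<Rightarrow> (nat \<Rightarrow> 'b) \<Rightarrow> fm2 \<Rightarrow> 'b" where
  "ifm1 n p g1 g2 v1 v2 (At1 k) = v1 k"
| "ifm1 n p g1 g2 v1 v2 One1 = top"
| "ifm1 n p g1 g2 v1 v2 Zero1 = bot"
| "ifm1 n p g1 g2 v1 v2 (Pf A) = p (ifm2 n p g1 g2 v1 v2 A)"
| "ifm1 n p g1 g2 v1 v2 (Meet1 A B) = inf (ifm1 n p g1 g2 v1 v2 A) (ifm1 n p g1 g2 v1 v2 B)"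
| "ifm1 n p g1 g2 v1 v2 (Join1 A B) = sup (ifm1 n p g1 g2 v1 v2 A) (ifm1 n p g1 g2 v1 v2 B)"
| "ifm1 n p g1 g2 v1 v2 (Neg1 A) = g1 (ifm1 n p g1 g2 v1 v2 A)"
| "ifm2 n p g1 g2 v1 v2 (At2 k) = v2 k"
| "ifm2 n p g1 g2 v1 v2 One2 = top"
| "ifm2 n p g1 g2 v1 v2 Zero2 = bot"
| "ifm2 n p g1 g2 v1 v2 (Nf A) = n (ifm1 n p g1 g2 v1 v2 A)"
| "ifm2 n p g1 g2 v1 v2 (Meet2 A B) = inf (ifm2 n p g1 g2 v1 v2 A) (ifm2 n p g1 g2 v1 v2 B)"
| "ifm2 n p g1 g2 v1 v2 (Join2 A B) = sup (ifm2 n p g1 g2 v1 v2 A) (ifm2 n p g1 g2 v1 v2 B)"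
| "ifm2 n p g1 g2 v1 v2 (Neg2 A) = g2 (ifm2 n p g1 g2 v1 v2 A)"

primrec istr1 :: "('a::complete_distrib_lattice \<Rightarrow> 'b::complete_distrib_lattice) \<Rightarrow> ('b \<Rightarrow> 'a)
      \<Rightarrow> ('a \<Rightarrow> 'a) \<Rightarrow> ('b \<Rightarrow> 'b) \<Rightarrow> (nat \<Rightarrow> 'a) \<Rightarrow> (nat \<Rightarrow> 'b) \<Rightarrow> str1 \<Rightarrow> 'a"
 and istr2 :: "('a::complete_distrib_lattice \<Rightarrow> 'b::complete_distrib_lattice) \<Rightarrow> ('b \<Rightarrow> 'a)
      \<Rightarrow> ('a \<Rightarrow> 'a) \<Rightarrow> ('b \<Rightarrow> 'b) \<Rightarrow> (nat \<Rightarrow> 'a) \<Rightarrow> (nat \<Rightarrow> 'b) \<Rightarrow> str2 \<Rightarrow> 'b" where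
  "istr1 n p g1 g2 v1 v2 (F1 A) = ifm1 n p g1 g2 v1 v2 A"
| "istr1 n p g1 g2 v1 v2 SOne1 = top"
| "istr1 n p g1 g2 v1 v2 SZero1 = bot"
| "istr1 n p g1 g2 v1 v2 (SP X) = p (istr2 n p g1 g2 v1 v2 X)"
| "istr1 n p g1 g2 v1 v2 (SMeet1 X Y) = inf (istr1 n p g1 g2 v1 v2 X) (istr1 n p g1 g2 v1 v2 Y)"
| "istr1 n p g1 g2 v1 v2 (SJoin1 X Y) = sup (istr1 n p g1 g2 v1 v2 X) (istr1 n p g1 g2 v1 v2 Y)"
| "istr1 n p g1 g2 v1 v2 (SImp1 X Y) = rres (istr1 n p g1 g2 v1 v2 X) (istr1 n p g1 g2 v1 v2 Y)"
| "istr1 n p g1 g2 v1 v2 (SCoimp1 X Y) = lres (istr1 n p g1 g2 v1 v2 X) (istr1 n p g1 g2 v1 v2 Y)"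
| "istr1 n p g1 g2 v1 v2 (SStar1 X) = g1 (istr1 n p g1 g2 v1 v2 X)"
| "istr2 n p g1 g2 v1 v2 (F2 A) = ifm2 n p g1 g2 v1 v2 A"
| "istr2 n p g1 g2 v1 v2 SOne2 = top"
| "istr2 n p g1 g2 v1 v2 SZero2 = bot"
| "istr2 n p g1 g2 v1 v2 (SN X) = n (istr1 n p g1 g2 v1 v2 X)"
| "istr2 n p g1 g2 v1 v2 (SMeet2 X Y) = inf (istr2 n p g1 g2 v1 v2 X) (istr2 n p g1 g2 v1 v2 Y)"
| "istr2 n p g1 g2 v1 v2 (SJoin2 X Y) = sup (istr2 n p g1 g2 v1 v2 X) (istr2 n p g1 g2 v1 v2 Y)"
| "istr2 n p g1 g2 v1 v2 (SImp2 X Y) = rres (istr2 n p g1 g2 v1 v2 X) (istr2 n p g1 g2 v1 v2 Y)"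
| "istr2 n p g1 g2 v1 v2 (SCoimp2 X Y) = lres (istr2 n p g1 g2 v1 v2 X) (istr2 n p g1 g2 v1 v2 Y)"
| "istr2 n p g1 g2 v1 v2 (SStar2 X) = g2 (istr2 n p g1 g2 v1 v2 X)"

fun holds :: "('a::complete_distrib_lattice \<Rightarrow> 'b::complete_distrib_lattice) \<Rightarrow> ('b \<Rightarrow> 'a)
      \<Rightarrow> ('a \<Rightarrow> 'a) \<Rightarrow> ('b \<Rightarrow> 'b) \<Rightarrow> (nat \<Rightarrow> 'a) \<Rightarrow> (nat \<Rightarrow> 'b) \<Rightarrow> seq \<Rightarrow> bool" where
  "holds n p g1 g2 v1 v2 (Seq1 X Y) = (istr1 n p g1 g2 v1 v2 X \<le> istr1 n p g1 g2 v1 v2 Y)"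
| "holds n p g1 g2 v1 v2 (Seq2 X Y) = (istr2 n p g1 g2 v1 v2 X \<le> istr2 n p g1 g2 v1 v2 Y)"

text \<open>In an HBL there is no conflation; D.BL sequents are conflation-free, so the
 (irrelevant) negation arguments are filled with the identity.\<close>
definition holds_BL :: "('a::complete_distrib_lattice \<Rightarrow> 'b::complete_distrib_lattice) \<Rightarrow> ('b \<Rightarrow> 'a)
      \<Rightarrow> (nat \<Rightarrow> 'a) \<Rightarrow> (nat \<Rightarrow> 'b) \<Rightarrow> seq \<Rightarrow> bool" where
  "holds_BL n p v1 v2 s = holds n p id id v1 v2 s"

end

theory Submission
  imports Defs
begin

text \<open>The
  display rules are residuation laws: for the meet and join, whose residuals exist by complete
  distributivity, and for n and p, which as mutually inverse order isomorphisms are adjoint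
  to each other on both sides. The structural and operational rules are lattice laws, and
  the conflation rules hold because De Morgan negations are antitone involutions commuting
  with n.\<close>

lemma le_rres_iff: "x \<le> rres y z \<longleftrightarrow> inf x y \<le> (z::'a::complete_distrib_lattice)"
proof
  assume "inf x y \<le> z"
  then show "x \<le> rres y z" unfolding rres_def by (auto intro: Sup_upper)
next
  assume "x \<le> rres y z"
  then have "inf x y \<le> inf (rres y z) y" by (rule inf_mono) simp
  also have "\<dots> = (SUP b\<in>{x. inf x y \<le> z}. inf y b)"
    unfolding rres_def by (simp add: inf_Sup inf_commute)
  also have "\<dots> \<le> z" by (auto intro!: SUP_least simp: inf_commute)
  finally show "inf x y \<le> z" .
qed

lemma lres_le_iff: "lres x y \<le> z \<longleftrightarrow> x \<le> sup y (z::'a::complete_distrib_lattice)"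
proof
  assume "x \<le> sup y z"
  then show "lres x y \<le> z" unfolding lres_def by (auto intro: Inf_lower)
next
  assume "lres x y \<le> z"
  have "x \<le> (INF b\<in>{z. x \<le> sup y z}. sup y b)" by (auto intro!: INF_greatest)
  also have "\<dots> = sup y (lres x y)" unfolding lres_def by (simp add: sup_Inf)
  also have "\<dots> \<le> sup y z" using \<open>lres x y \<le> z\<close> by (rule sup_mono[OF order_refl])
  finally show "x \<le> sup y z" .
qed

context
  fixes n :: "'a::complete_distrib_lattice \<Rightarrow> 'b::complete_distrib_lattice" and p :: "'b \<Rightarrow> 'a"
  assumes iso: "lattice_iso_pair n p"
begin

lemma lattice_iso_pair_p_n [simp]: "p (n a) = a"
  and lattice_iso_pair_n_p [simp]: "n (p b) = b"
  and lattice_iso_pair_p_bot [simp]: "p bot = bot"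
  and lattice_iso_pair_p_top [simp]: "p top = top"
  using iso unfolding lattice_iso_pair_def by auto

lemma lattice_iso_pair_p_le_iff [simp]: "p b \<le> p b' \<longleftrightarrow> b \<le> b'"
  using iso unfolding lattice_iso_pair_def by (metis le_iff_inf)

text \<open>Both adjunctions are oriented towards p so that the simp set terminates.\<close>

lemma lattice_iso_pair_le_n_iff [simp]: "a \<le> n b \<longleftrightarrow> p a \<le> b"
  by (metis lattice_iso_pair_p_le_iff lattice_iso_pair_p_n)

lemma lattice_iso_pair_n_le_iff [simp]: "n a \<le> b \<longleftrightarrow> a \<le> p b"
  by (metis lattice_iso_pair_p_le_iff lattice_iso_pair_p_n)

lemma rule_common_sound:
  assumes "rule_common ps c" and "\<forall>q\<in>set ps. holds n p g1 g2 v1 v2 q"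
  shows "holds n p g1 g2 v1 v2 c"
  using assms
  by (cases rule: rule_common.cases)
    (auto simp: le_rres_iff lres_le_iff
        inf.assoc inf.left_commute inf.commute sup.assoc sup.left_commute sup.commute
      intro: order_trans le_infI1 le_infI2 le_supI1 le_supI2)

end

lemma de_morgan_neg_le_iff:
  assumes "de_morgan_neg g" shows "g a \<le> g b \<longleftrightarrow> b \<le> a"
  using assms unfolding de_morgan_neg_def by (metis inf.cobounded1 sup.absorb2)

lemma de_morgan_neg_le_swap:
  assumes "de_morgan_neg g"
  shows "g a \<le> b \<Longrightarrow> g b \<le> a" and "a \<le> g b \<Longrightarrow> b \<le> g a"
  using de_morgan_neg_le_iff[OF assms] assms unfolding de_morgan_neg_def by metis+

lemma rule_conf_sound:
  assumes "de_morgan_neg g1" and "de_morgan_neg g2" and "\<forall>a. n (g1 a) = g2 (n a)"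
    and "rule_conf ps c" and "\<forall>q\<in>set ps. holds n p g1 g2 v1 v2 q"
  shows "holds n p g1 g2 v1 v2 c"
  using assms(4,5)
  by (cases rule: rule_conf.cases)
    (auto simp: assms(3) de_morgan_neg_le_iff[OF assms(1)] de_morgan_neg_le_iff[OF assms(2)]
      intro: de_morgan_neg_le_swap[OF assms(1)] de_morgan_neg_le_swap[OF assms(2)])

lemma rule_BL_sound:
  assumes "lattice_iso_pair n p" and "rule_BL ps c" and "\<forall>q\<in>set ps. holds_BL n p v1 v2 q"
  shows "holds_BL n p v1 v2 c"
  using assms rule_common_sound unfolding rule_BL_def holds_BL_def by blast

lemma rule_CBL_sound:
  assumes "perfect_HCBL n p g1 g2" and "rule_CBL ps c"
    and "\<forall>q\<in>set ps. holds n p g1 g2 v1 v2 q"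
  shows "holds n p g1 g2 v1 v2 c"
proof -
  have "lattice_iso_pair n p" "de_morgan_neg g1" "de_morgan_neg g2" "\<forall>a. n (g1 a) = g2 (n a)"
    using assms(1) unfolding perfect_HCBL_def perfect_HBL_def by simp_all
  then show ?thesis
    using assms(2,3) rule_common_sound rule_conf_sound unfolding rule_CBL_def by metis
qed

lemma deriv_BL_sound:
  assumes "lattice_iso_pair n p" and "deriv_BL s"
  shows "holds_BL n p v1 v2 s"
  using assms(2) by induction (use rule_BL_sound[OF assms(1)] in blast)

lemma deriv_CBL_sound:
  assumes "perfect_HCBL n p g1 g2" and "deriv_CBL s"
  shows "holds n p g1 g2 v1 v2 s"
  using assms(2) by induction (use rule_CBL_sound[OF assms(1)] in blast)

theorem mainTheorem1:
  fixes n :: "'a::complete_distrib_lattice \<Rightarrow> 'b::complete_distrib_lattice"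
    and p :: "'b \<Rightarrow> 'a"
  shows
   "(perfect_HBL n p \<longrightarrow>
       (\<forall>v1 v2.
          (\<forall>ps c. rule_BL ps c \<longrightarrow> (\<forall>q\<in>set ps. holds_BL n p v1 v2 q) \<longrightarrow> holds_BL n p v1 v2 c) \<and>
          (\<forall>s. deriv_BL s \<longrightarrow> holds_BL n p v1 v2 s)))
    \<and> (\<forall>ng1 ng2. perfect_HCBL n p ng1 ng2 \<longrightarrow>
       (\<forall>v1 v2.
          (\<forall>ps c. rule_CBL ps c \<longrightarrow> (\<forall>q\<in>set ps. holds n p ng1 ng2 v1 v2 q) \<longrightarrow> holds n p ng1 ng2 v1 v2 c) \<and>
          (\<forall>s. deriv_CBL s \<longrightarrow> holds n p ng1 ng2 v1 v2 s)))"
proof -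
  have iso: "lattice_iso_pair n p" if "perfect_HBL n p"
    using that unfolding perfect_HBL_def by blast
  show ?thesis
    by (auto intro: rule_BL_sound[OF iso] deriv_BL_sound[OF iso] rule_CBL_sound deriv_CBL_sound)
qed

end
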